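(* Let $\mathcal{M}=\mathcal{M}(a,b,c,d,e,f)$ be a Type $\mathcal{A}$ model which is not flat. Then its Ricci tensor $\rho$ is a multiple of $dx^2\otimes dx^2$ if and only if $b=0$ and $d=0$.
   Context: For $(a,b,c,d,e,f)\in\mathbb{R}^6$, the Type $\mathcal{A}$ model $\mathcal{M}(a,b,c,d,e,f)$ is $(\mathbb{R}^2,\nabla)$ with torsion free connection with constant Christoffel symbols ($\nabla_{\partial_{x^i}}\partial_{x^j}=\Gamma_{ij}{}^k\partial_{x^k}$) $\Gamma_{11}{}^1=a$, $\Gamma_{11}{}^2=b$, $\Gamma_{12}{}^1=\Gamma_{21}{}^1=c$, $\Gamma_{12}{}^2=\Gamma_{21}{}^2=d$, $\Gamma_{22}{}^1=e$, $\Gamma_{22}{}^2=f$. Its Ricci tensor is $\rho=\begin{pmatrix}(a-d)d+b(f-c) & cd-be\\ cd-be & c(f-c)+(a-d)e\end{pmatrix}$; the model is flat iff $\rho=0$. *)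

theory Defs
  imports "HOL-Analysis.Analysis"
begin

text \<open>Ricci tensor of the Type A model M(a,b,c,d,e,f), as a 2x2 matrix indexed by
  the coordinates x^1 (index 1) and x^2 (index 2) of R^2.\<close>
definition ricciA :: "real \<Rightarrow> real \<Rightarrow> real \<Rightarrow> real \<Rightarrow> real \<Rightarrow> real \<Rightarrow> real^2^2" where
  "ricciA a b c d e f =
     (\<chi> i j. if i = 1 \<and> j = 1 then (a - d) * d + b * (f - c)
             else if i = 2 \<and> j = 2 then c * (f - c) + (a - d) * e
             else c * d - b * e)"

definition flatA :: "real \<Rightarrow> real \<Rightarrow> real \<Rightarrow> real \<Rightarrow> real \<Rightarrow> real \<Rightarrow> bool" where
  "flatA a b c d e f \<longleftrightarrow> ricciA a b c d e f = 0"

definition dx2dx2 :: "real^2^2" where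
  "dx2dx2 = (\<chi> i j. if i = 2 \<and> j = 2 then 1 else 0)"

end

theory Submission
  imports Defs
begin

text \<open>Writing \<open>\<rho>\<^sub>i\<^sub>j\<close> for the Ricci components, one has the identity
  \<open>b \<rho>\<^sub>2\<^sub>2 = c \<rho>\<^sub>1\<^sub>1 - (a - d) \<rho>\<^sub>1\<^sub>2\<close>. So if \<open>\<rho>\<^sub>1\<^sub>1 = \<rho>\<^sub>1\<^sub>2 = 0\<close> and \<open>\<rho>\<^sub>2\<^sub>2 \<noteq> 0\<close>
  then \<open>b = 0\<close>; now \<open>\<rho>\<^sub>1\<^sub>1 = (a - d) d\<close> and \<open>\<rho>\<^sub>1\<^sub>2 = c d\<close>, and \<open>d \<noteq> 0\<close> would force
  \<open>a = d\<close>, \<open>c = 0\<close> and hence \<open>\<rho>\<^sub>2\<^sub>2 = 0\<close>.\<close>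

lemma ricciA_eq_scaleR_dx2dx2_iff:
  "ricciA a b c d e f = k *\<^sub>R dx2dx2 \<longleftrightarrow>
     (a - d) * d + b * (f - c) = 0 \<and> c * d - b * e = 0 \<and> c * (f - c) + (a - d) * e = k"
  by (auto simp: ricciA_def dx2dx2_def vec_eq_iff forall_2)

lemma flatA_iff:
  "flatA a b c d e f \<longleftrightarrow>
     (a - d) * d + b * (f - c) = 0 \<and> c * d - b * e = 0 \<and> c * (f - c) + (a - d) * e = 0"
  using ricciA_eq_scaleR_dx2dx2_iff[of a b c d e f 0] by (simp add: flatA_def)

lemma ricci_syzygy:
  fixes a b c d e f :: "'a :: comm_ring"
  shows "b * (c * (f - c) + (a - d) * e) =
           c * ((a - d) * d + b * (f - c)) - (a - d) * (c * d - b * e)"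
  by (simp add: algebra_simps)

lemma ricci_offdiag_vanish_imp:
  fixes a b c d e f :: "'a :: idom"
  assumes rho11: "(a - d) * d + b * (f - c) = 0"
    and rho12: "c * d - b * e = 0"
    and rho22: "c * (f - c) + (a - d) * e \<noteq> 0"
  shows "b = 0 \<and> d = 0"
proof
  show b: "b = 0"
    using ricci_syzygy[of b c f a d e] rho11 rho12 rho22 by simp
  show "d = 0"
  proof (rule ccontr)
    assume "d \<noteq> 0"
    with rho11 rho12 b have "a = d" "c = 0" by auto
    with rho22 show False by simp
  qed
qed

theorem lemma3p1:
  fixes a b c d e f :: real
  assumes "\<not> flatA a b c d e f"
  shows "(\<exists>k::real. ricciA a b c d e f = k *\<^sub>R dx2dx2) \<longleftrightarrow> (b = 0 \<and> d = 0)"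
proof
  assume "\<exists>k::real. ricciA a b c d e f = k *\<^sub>R dx2dx2"
  then have "(a - d) * d + b * (f - c) = 0" "c * d - b * e = 0"
    by (auto simp: ricciA_eq_scaleR_dx2dx2_iff)
  moreover from this assms have "c * (f - c) + (a - d) * e \<noteq> 0"
    by (simp add: flatA_iff)
  ultimately show "b = 0 \<and> d = 0"
    by (rule ricci_offdiag_vanish_imp)
next
  assume "b = 0 \<and> d = 0"
  then show "\<exists>k::real. ricciA a b c d e f = k *\<^sub>R dx2dx2"
    by (auto simp: ricciA_eq_scaleR_dx2dx2_iff)
qed

end
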